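(* Let $F=\breve F(\alpha_1,\dots,\alpha_t)$ be a fence, let $i\in[t]$ with $\alpha_i\ge 2$, let $x\in\breve S_i$, let $v$ be the valley of $S_i$ (if it exists) and $p$ the peak of $S_i$ (if it exists), and put $y=s_{(i,1)}$, $z=s_{(i,\beta_i)}$. Then, as functions on $\mathcal J(F)$, \[ \alpha_i\chi_x+\chi_v+\chi_p=1-T_v-\sum_{y\trianglelefteq u\trianglelefteq x}\#[y,u]\,T_u+\sum_{x\vartriangleleft u\trianglelefteq z}\#[u,z]\,T_u , \] where $[a,b]=\{w\in F: a\trianglelefteq w\trianglelefteq b\}$ is an interval of $F$.
   Context: Fences: let $\alpha=(\alpha_1,\dots,\alpha_t)$ be positive integers with $t\ge2$ and $\alpha_1,\alpha_t\ge2$. Put $a_0=0$, $a_i=\alpha_1+\dots+\alpha_i$, $n=a_t-1$. The fence $\breve F(\alpha)$ is the poset (order $\trianglelefteq$) on $\{x_1,\dots,x_n\}$ whose cover relations are: for $1\le j\le n-1$ with $a_{i-1}\le j<a_i$, $x_j\lessdot x_{j+1}$ if $i$ is odd and $x_j\gtrdot x_{j+1}$ if $i$ is even. Segments: $S_1=\{x_j:1\le j\le a_1\}$, $S_i=\{x_j:a_{i-1}\le j\le a_i\}$ for $2\le i\le t-1$, $S_t=\{x_j:a_{t-1}\le j\le n\}$ (each a chain). The shared elements are $s_i=x_{a_i}$, $i\in[t-1]$; $s_i$ is a peak (covers two elements) for $i$ odd and a valley (is covered by two elements) for $i$ even. The peak (valley) of $S_i$ is the shared element of $S_i$ that is a peak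 (valley), if any. $\breve S_i$ is the set of unshared elements of $S_i$; $\beta_i=\#\breve S_i=\alpha_i-1$; $s_{(i,j)}$ is the $j$-th smallest element of $\breve S_i$ in the order of $F$. $\mathcal J(F)$ is the set of order ideals. For $q\in F$ and $I\in\mathcal J(F)$: $\chi_q(I)=1$ if $q\in\max(I)$ and $0$ otherwise; $T_q(I)=1$ if $q\notin I$ and $I\cup\{q\}$ is an ideal (i.e. $q\in\min(F\setminus I)$), $T_q(I)=-1$ if $q\in\max(I)$, and $T_q(I)=0$ otherwise. Convention: any statistic indexed by a nonexistent element (e.g. the valley of a segment with no valley) is identically zero. *)

theory Defs
  imports Main
begin

text \<open>A fence is given by the list alpha = [alpha_1, ..., alpha_t] (1-based indices in the
paper, alpha_i = alpha ! (i - 1)). The element x_j is represented by the natural number j.\<close>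

definition fa :: "nat list \<Rightarrow> nat \<Rightarrow> nat" where
  "fa alpha i = sum_list (take i alpha)"

definition fn :: "nat list \<Rightarrow> nat" where
  "fn alpha = fa alpha (length alpha) - 1"

definition felems :: "nat list \<Rightarrow> nat set" where
  "felems alpha = {1..fn alpha}"

text \<open>Cover relation: pairs (lower, upper).\<close>
definition fcover :: "nat list \<Rightarrow> (nat \<times> nat) set" where
  "fcover alpha =
     {(j, Suc j) | j i. 1 \<le> j \<and> j \<le> fn alpha - 1 \<and> 1 \<le> i \<and> i \<le> length alpha
        \<and> fa alpha (i - 1) \<le> j \<and> j < fa alpha i \<and> odd i}
   \<union> {(Suc j, j) | j i. 1 \<le> j \<and> j \<le> fn alpha - 1 \<and> 1 \<le> i \<and> i \<le> length alpha
        \<and> fa alpha (i - 1) \<le> j \<and> j < fa alpha i \<and> even i}"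

definition fle :: "nat list \<Rightarrow> nat \<Rightarrow> nat \<Rightarrow> bool" where
  "fle alpha u w \<longleftrightarrow> u \<in> felems alpha \<and> w \<in> felems alpha \<and> (u, w) \<in> (fcover alpha)\<^sup>*"

definition flt :: "nat list \<Rightarrow> nat \<Rightarrow> nat \<Rightarrow> bool" where
  "flt alpha u w \<longleftrightarrow> fle alpha u w \<and> u \<noteq> w"

definition finterval :: "nat list \<Rightarrow> nat \<Rightarrow> nat \<Rightarrow> nat set" where
  "finterval alpha u w = {q \<in> felems alpha. fle alpha u q \<and> fle alpha q w}"

definition fsegment :: "nat list \<Rightarrow> nat \<Rightarrow> nat set" where
  "fsegment alpha i = {fa alpha (i - 1) .. fa alpha i} \<inter> felems alpha"

definition fshared :: "nat list \<Rightarrow> nat set" where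
  "fshared alpha = {fa alpha k | k. 1 \<le> k \<and> k \<le> length alpha - 1}"

definition funshared :: "nat list \<Rightarrow> nat \<Rightarrow> nat set" where
  "funshared alpha i = fsegment alpha i - fshared alpha"

definition fis_peak :: "nat list \<Rightarrow> nat \<Rightarrow> bool" where
  "fis_peak alpha q \<longleftrightarrow> card {w \<in> felems alpha. (w, q) \<in> fcover alpha} = 2"

definition fis_valley :: "nat list \<Rightarrow> nat \<Rightarrow> bool" where
  "fis_valley alpha q \<longleftrightarrow> card {w \<in> felems alpha. (q, w) \<in> fcover alpha} = 2"

definition fpeak :: "nat list \<Rightarrow> nat \<Rightarrow> nat option" where
  "fpeak alpha i =
     (if \<exists>q \<in> fsegment alpha i \<inter> fshared alpha. fis_peak alpha q
      then Some (THE q. q \<in> fsegment alpha i \<inter> fshared alpha \<and> fis_peak alpha q)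
      else None)"

definition fvalley :: "nat list \<Rightarrow> nat \<Rightarrow> nat option" where
  "fvalley alpha i =
     (if \<exists>q \<in> fsegment alpha i \<inter> fshared alpha. fis_valley alpha q
      then Some (THE q. q \<in> fsegment alpha i \<inter> fshared alpha \<and> fis_valley alpha q)
      else None)"

definition fsmin :: "nat list \<Rightarrow> nat \<Rightarrow> nat" where
  "fsmin alpha i = (THE u. u \<in> funshared alpha i \<and> (\<forall>w \<in> funshared alpha i. fle alpha u w))"

definition fsmax :: "nat list \<Rightarrow> nat \<Rightarrow> nat" where
  "fsmax alpha i = (THE u. u \<in> funshared alpha i \<and> (\<forall>w \<in> funshared alpha i. fle alpha w u))"

definition fideal :: "nat list \<Rightarrow> nat set \<Rightarrow> bool" where
  "fideal alpha I \<longleftrightarrow> I \<subseteq> felems alpha \<and> (\<forall>u \<in> I. \<forall>w. fle alpha w u \<longrightarrow> w \<in> I)"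

definition fmax :: "nat list \<Rightarrow> nat set \<Rightarrow> nat set" where
  "fmax alpha I = {q \<in> I. \<not> (\<exists>w \<in> I. flt alpha q w)}"

definition fchi :: "nat list \<Rightarrow> nat \<Rightarrow> nat set \<Rightarrow> int" where
  "fchi alpha q I = (if q \<in> fmax alpha I then 1 else 0)"

definition fT :: "nat list \<Rightarrow> nat \<Rightarrow> nat set \<Rightarrow> int" where
  "fT alpha q I =
     (if q \<in> felems alpha \<and> q \<notin> I \<and> fideal alpha (insert q I) then 1
      else if q \<in> fmax alpha I then -1 else 0)"

definition optstat :: "(nat \<Rightarrow> nat set \<Rightarrow> int) \<Rightarrow> nat option \<Rightarrow> nat set \<Rightarrow> int" where
  "optstat f q I = (case q of None \<Rightarrow> 0 | Some r \<Rightarrow> f r I)"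

end

theory Submission
  imports Defs
begin

text \<open>The unshared elements of S_i form a chain s_(i,1) < ... < s_(i,beta_i), continued below
  by the valley and above by the peak of S_i. An order ideal I meets this chain in an initial
  piece s_(i,1), ..., s_(i,k). Hence on the chain T is +1 only at s_(i,k+1) and -1 only at
  s_(i,k), apart from the exceptions forced by the valley (k = 0) and the peak (k = beta_i), and
  chi_x = 1 only for x = s_(i,k). As #[y, s_(i,j)] = j and #[s_(i,j), z] = beta_i + 1 - j, both
  sides become explicit functions of k and of whether the valley is outside and the peak inside
  I, and the identity reduces to a short case distinction.\<close>

section \<open>The order of a fence\<close>

lemma fa_Suc: "k < length al \<Longrightarrow> fa al (Suc k) = fa al k + al ! k"
  by (simp add: fa_def take_Suc_conv_app_nth)

lemma fa_mono: "k \<le> k' \<Longrightarrow> fa al k \<le> fa al k'"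
  by (auto simp: fa_def take_add dest!: le_Suc_ex)

lemma fcover_adjacent:
  "(u, w) \<in> fcover al \<Longrightarrow> (w = Suc u \<or> u = Suc w) \<and> u \<in> felems al \<and> w \<in> felems al"
  unfolding fcover_def felems_def by auto

lemma fcover_in_segment:
  assumes "1 \<le> k" "k \<le> length al" "fa al (k - 1) \<le> s" "s < fa al k" "1 \<le> s" "Suc s \<le> fn al"
  shows "(odd k \<longrightarrow> (s, Suc s) \<in> fcover al) \<and> (even k \<longrightarrow> (Suc s, s) \<in> fcover al)"
  using assms unfolding fcover_def by auto

text \<open>The segment containing the step from s to Suc s is unique, so the step has one direction.\<close>
lemma fcover_Suc_asym: "(s, Suc s) \<in> fcover al \<Longrightarrow> (Suc s, s) \<notin> fcover al"
proof
  assume "(s, Suc s) \<in> fcover al" "(Suc s, s) \<in> fcover al"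
  then obtain k k' where k: "odd k" "even k'" "1 \<le> k" "1 \<le> k'"
    "fa al (k - 1) \<le> s" "s < fa al k" "fa al (k' - 1) \<le> s" "s < fa al k'"
    unfolding fcover_def by auto
  have "k \<noteq> k'" using k by auto
  then have "k \<le> k' - 1 \<or> k' \<le> k - 1" by linarith
  then have "fa al k \<le> fa al (k' - 1) \<or> fa al k' \<le> fa al (k - 1)" using fa_mono by blast
  with k show False by auto
qed

lemma fcover_asym: "(u, w) \<in> fcover al \<Longrightarrow> (w, u) \<notin> fcover al"
  using fcover_adjacent fcover_Suc_asym by metis

definition fence_run :: "nat list \<Rightarrow> nat \<Rightarrow> nat \<Rightarrow> bool" where
  "fence_run al u w \<longleftrightarrow>
     (u \<le> w \<and> (\<forall>j. u \<le> j \<and> j < w \<longrightarrow> (j, Suc j) \<in> fcover al))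
     \<or> (w \<le> u \<and> (\<forall>j. w \<le> j \<and> j < u \<longrightarrow> (Suc j, j) \<in> fcover al))"

text \<open>A chain of covers cannot turn around, since no pair of neighbours is joined by covers in
  both directions.\<close>
lemma fcover_rtrancl_imp_fence_run:
  assumes "(u, w) \<in> (fcover al)\<^sup>*"
  shows "fence_run al u w"
  using assms unfolding fence_run_def
proof (induction rule: rtrancl_induct)
  case base
  then show ?case by auto
next
  case (step w w')
  from fcover_adjacent[OF step(2)] consider "w' = Suc w" | "w = Suc w'" by auto
  then show ?case
  proof cases
    case 1
    then have "(Suc w, w) \<notin> fcover al" using step(2) fcover_asym by blast
    then show ?thesis using step(2,3) 1 by (auto simp: less_Suc_eq)
  next
    case 2
    then have "(w', w) \<notin> fcover al" using step(2) fcover_asym by blast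
    then show ?thesis
      using step(2,3) 2 by (auto simp: less_Suc_eq le_Suc_eq) (metis le_eq_less_or_eq Suc_le_eq)
  qed
qed

lemma rtrancl_ascending_run:
  assumes "u \<le> w" "\<forall>j. u \<le> j \<and> j < w \<longrightarrow> (j, Suc j) \<in> C"
  shows "(u, w) \<in> C\<^sup>*"
  using assms(1) by (induction rule: dec_induct) (use assms(2) in \<open>auto intro: rtrancl_into_rtrancl\<close>)

lemma rtrancl_descending_run:
  assumes "w \<le> u" "\<forall>j. w \<le> j \<and> j < u \<longrightarrow> (Suc j, j) \<in> C"
  shows "(u, w) \<in> C\<^sup>*"
  using assms(1)
  by (induction rule: dec_induct) (use assms(2) in \<open>auto intro: converse_rtrancl_into_rtrancl\<close>)

lemma fle_iff_fence_run: "fle al u w \<longleftrightarrow> u \<in> felems al \<and> w \<in> felems al \<and> fence_run al u w"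
proof -
  have "(u, w) \<in> (fcover al)\<^sup>* \<longleftrightarrow> fence_run al u w"
  proof
    assume "fence_run al u w"
    then show "(u, w) \<in> (fcover al)\<^sup>*"
      using rtrancl_ascending_run[of u w] rtrancl_descending_run[of w u]
      unfolding fence_run_def by (elim disjE conjE) auto
  qed (rule fcover_rtrancl_imp_fence_run)
  then show ?thesis unfolding fle_def by blast
qed

lemma fle_between_bounds:
  assumes "fle al a p" "fle al p b"
  shows "min a b \<le> p \<and> p \<le> max a b"
proof (rule ccontr)
  note runs = assms[unfolded fle_iff_fence_run fence_run_def]
  assume "\<not> (min a b \<le> p \<and> p \<le> max a b)"
  then consider "p < a" "p < b" | "a < p" "b < p" by linarith
  then show False
  proof cases
    case 1
    then have "(Suc p, p) \<in> fcover al" "(p, Suc p) \<in> fcover al" using runs by auto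
    then show False using fcover_Suc_asym by blast
  next
    case 2
    then obtain q where q: "p = Suc q" "a \<le> q" "b \<le> q" by (cases p) auto
    then have "(Suc q, q) \<in> fcover al" "(q, Suc q) \<in> fcover al" using runs 2 by auto
    then show False using fcover_Suc_asym by blast
  qed
qed

lemma fle_betweenI:
  assumes "fle al a b" "min a b \<le> p" "p \<le> max a b"
  shows "fle al a p \<and> fle al p b"
proof -
  note run = assms(1)[unfolded fle_iff_fence_run fence_run_def]
  have "p \<in> felems al" using run assms(2,3) unfolding felems_def by auto
  then show ?thesis
  proof (cases "a \<le> b")
    case True
    then have "\<forall>j. a \<le> j \<and> j < b \<longrightarrow> (j, Suc j) \<in> fcover al" using run by auto
    then show ?thesis using True assms(2,3) run \<open>p \<in> felems al\<close> unfolding fle_iff_fence_run fence_run_def by auto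
  next
    case False
    then have "\<forall>j. b \<le> j \<and> j < a \<longrightarrow> (Suc j, j) \<in> fcover al" using run by auto
    then show ?thesis using False assms(2,3) run \<open>p \<in> felems al\<close> unfolding fle_iff_fence_run fence_run_def by auto
  qed
qed

lemma fle_antisym: "fle al a b \<Longrightarrow> fle al b a \<Longrightarrow> a = b"
  using fle_between_bounds[of al a b a] by auto

lemma finterval_eq_atLeastAtMost:
  assumes "fle al a b"
  shows "finterval al a b = {min a b .. max a b}"
proof
  show "finterval al a b \<subseteq> {min a b..max a b}"
    unfolding finterval_def using fle_between_bounds by fastforce
  show "{min a b..max a b} \<subseteq> finterval al a b"
    using fle_betweenI[OF assms] unfolding finterval_def fle_def by auto
qed

lemma fmax_iff_no_cover_in:
  assumes "fideal al I" "q \<in> I"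
  shows "q \<in> fmax al I \<longleftrightarrow> (\<forall>w. (q, w) \<in> fcover al \<longrightarrow> w \<notin> I)"
proof
  assume "q \<in> fmax al I"
  then show "\<forall>w. (q, w) \<in> fcover al \<longrightarrow> w \<notin> I"
    using fcover_adjacent unfolding fmax_def flt_def fle_def by fastforce
next
  assume no_cover: "\<forall>w. (q, w) \<in> fcover al \<longrightarrow> w \<notin> I"
  have False if w: "w \<in> I" "(q, w) \<in> (fcover al)\<^sup>*" "q \<noteq> w" for w
  proof -
    obtain q' where "(q, q') \<in> fcover al" "(q', w) \<in> (fcover al)\<^sup>*"
      using w(2,3) by (metis converse_rtranclE)
    moreover from this have "fle al q' w"
      using fcover_adjacent w(1) assms(1) unfolding fle_def fideal_def by blast
    ultimately show False using no_cover w(1) assms(1) unfolding fideal_def by blast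
  qed
  then show "q \<in> fmax al I" using assms(2) unfolding fmax_def flt_def fle_def by blast
qed

lemma fideal_insert_iff_covers_in:
  assumes "fideal al I" "q \<in> felems al"
  shows "fideal al (insert q I) \<longleftrightarrow> (\<forall>w. (w, q) \<in> fcover al \<longrightarrow> w \<in> I)"
proof
  assume "fideal al (insert q I)"
  then show "\<forall>w. (w, q) \<in> fcover al \<longrightarrow> w \<in> I"
    using fcover_adjacent unfolding fideal_def fle_def by fastforce
next
  assume covers_in: "\<forall>w. (w, q) \<in> fcover al \<longrightarrow> w \<in> I"
  have "w \<in> I" if w: "(w, q) \<in> (fcover al)\<^sup>*" "w \<noteq> q" "w \<in> felems al" for w
  proof -
    obtain q' where "(w, q') \<in> (fcover al)\<^sup>*" "(q', q) \<in> fcover al"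
      using w(1,2) by (metis rtranclE)
    moreover from this have "fle al w q'" using fcover_adjacent w(3) unfolding fle_def by blast
    ultimately show "w \<in> I" using covers_in assms(1) unfolding fideal_def by blast
  qed
  then show "fideal al (insert q I)" using assms unfolding fideal_def fle_def by blast
qed

lemma valley_if_covers:
  assumes "(q, q - 1) \<in> fcover al" "(q, Suc q) \<in> fcover al"
  shows "fis_valley al q \<and> \<not> fis_peak al q \<and> (\<forall>w. (w, q) \<notin> fcover al)"
proof -
  have not_covering: "(w, q) \<notin> fcover al" for w
    using assms fcover_asym fcover_adjacent by (metis diff_Suc_1)
  have "{w \<in> felems al. (q, w) \<in> fcover al} = {q - 1, Suc q}"
    using assms fcover_adjacent by fastforce
  then show ?thesis using not_covering unfolding fis_valley_def fis_peak_def by auto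
qed

lemma peak_if_covers:
  assumes "(q - 1, q) \<in> fcover al" "(Suc q, q) \<in> fcover al"
  shows "fis_peak al q \<and> \<not> fis_valley al q \<and> (\<forall>w. (q, w) \<notin> fcover al)"
proof -
  have not_covered: "(q, w) \<notin> fcover al" for w
    using assms fcover_asym fcover_adjacent by (metis diff_Suc_1)
  have "{w \<in> felems al. (w, q) \<in> fcover al} = {q - 1, Suc q}"
    using assms fcover_adjacent by fastforce
  then show ?thesis using not_covered unfolding fis_valley_def fis_peak_def by auto
qed

section \<open>A counting identity\<close>

lemma sum_mult_of_bool_point:
  fixes g :: "nat \<Rightarrow> int"
  assumes "finite S"
  shows "(\<Sum>j\<in>S. g j * of_bool (j = a \<and> X j)) = (if a \<in> S \<and> X a then g a else 0)"
proof -
  have "(\<Sum>j\<in>S. g j * of_bool (j = a \<and> X j)) = (\<Sum>j\<in>S. if j = a then (if X a then g a else 0) else 0)"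
    by (rule sum.cong) auto
  then show ?thesis using assms by simp
qed

lemma level_count_identity:
  fixes k m \<beta> :: nat and N P :: bool
  assumes "1 \<le> m" "m \<le> \<beta>" "k \<le> \<beta>" "N \<longrightarrow> k = 0" "P \<longrightarrow> k = \<beta>"
  defines "T j \<equiv> of_bool (j = Suc k \<and> (2 \<le> j \<or> \<not> N)) - of_bool (j = k \<and> (j < \<beta> \<or> \<not> P)) :: int"
  shows "int (Suc \<beta>) * of_bool (m = k \<and> (m < \<beta> \<or> \<not> P)) + of_bool N + of_bool P
    = 1 - (\<Sum>j=1..m. int j * T j) + (\<Sum>j=Suc m..\<beta>. int (Suc \<beta> - j) * T j)"
  unfolding T_def right_diff_distrib sum_subtractf
  unfolding sum_mult_of_bool_point[OF finite_atLeastAtMost]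
  using assms(1-5) by (cases N; cases P; cases "m = k") (auto simp: of_nat_diff)

section \<open>The segment S_i as a chain\<close>

locale fence_segment =
  fixes al :: "nat list" and i :: nat
  assumes length_ge_2: "length al \<ge> 2" and parts_pos: "\<forall>k\<in>set al. k > 0"
    and hd_ge_2: "hd al \<ge> 2" and last_ge_2: "last al \<ge> 2"
    and i_ge_1: "1 \<le> i" and i_le_length: "i \<le> length al" and part_i_ge_2: "al ! (i - 1) \<ge> 2"
begin

definition lo :: nat where "lo = fa al (i - 1)"
definition hi :: nat where "hi = fa al i"
definition \<beta> :: nat where "\<beta> = hi - lo - 1"

text \<open>For 1 \<le> j \<le> \<beta>, sij j is s_(i,j); sij 0 is the valley and sij (Suc \<beta>) the peak
  of S_i, or a position outside felems al when S_i has none. Segments with odd index ascend,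
  those with even index descend.\<close>
definition sij :: "nat \<Rightarrow> nat" where "sij j = (if odd i then lo + j else hi - j)"

lemma hi_eq: "hi = lo + al ! (i - 1)"
  using fa_Suc[of "i - 1" al] i_ge_1 i_le_length by (simp add: lo_def hi_def)

lemma hi_le: "hi \<le> fa al (length al)"
  unfolding hi_def using i_le_length by (rule fa_mono)

lemma Suc_beta: "Suc \<beta> = hi - lo" and beta_ge_1: "1 \<le> \<beta>"
  using hi_eq part_i_ge_2 by (auto simp: \<beta>_def)

lemma alpha_i_eq: "al ! (i - 1) = Suc \<beta>"
  using Suc_beta hi_eq by simp

lemma lo_bounds: "2 \<le> i \<Longrightarrow> 2 \<le> lo \<and> Suc lo \<le> fn al"
proof -
  assume "2 \<le> i"
  then have "fa al 1 \<le> lo" unfolding lo_def by (intro fa_mono) auto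
  moreover have "fa al 1 = hd al" using length_ge_2 by (cases al) (auto simp: fa_def)
  ultimately show ?thesis using hd_ge_2 hi_eq hi_le part_i_ge_2 by (auto simp: fn_def)
qed

lemma hi_bounds: "i < length al \<Longrightarrow> 2 \<le> hi \<and> Suc hi \<le> fn al"
proof -
  assume "i < length al"
  then have "hi \<le> fa al (length al - 1)" unfolding hi_def by (intro fa_mono) auto
  moreover have "fa al (length al) = fa al (length al - 1) + last al"
  proof -
    have "al \<noteq> []" "Suc (length al - 1) = length al" using length_ge_2 by auto
    then show ?thesis using fa_Suc[of "length al - 1" al] by (simp add: last_conv_nth)
  qed
  ultimately show ?thesis using last_ge_2 hi_eq part_i_ge_2 by (auto simp: fn_def)
qed

lemma lo_in_felems_iff: "lo \<in> felems al \<longleftrightarrow> 2 \<le> i"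
proof (cases "2 \<le> i")
  case True
  then show ?thesis using lo_bounds by (simp add: felems_def)
next
  case False
  then have "i - 1 = 0" by simp
  then have "lo = 0" unfolding lo_def by (simp add: fa_def)
  then show ?thesis using False by (simp add: felems_def)
qed

lemma hi_in_felems_iff: "hi \<in> felems al \<longleftrightarrow> i < length al"
proof (cases "i < length al")
  case True
  then show ?thesis using hi_bounds by (simp add: felems_def)
next
  case False
  then have "i = length al" using i_le_length by simp
  then have "hi = fa al (length al)" unfolding hi_def by simp
  then show ?thesis using False hi_eq part_i_ge_2 by (simp add: felems_def fn_def)
qed

lemma fcover_inside:
  assumes "lo \<le> s" "s < hi" "1 \<le> s" "Suc s \<le> fn al"
  shows "(odd i \<longrightarrow> (s, Suc s) \<in> fcover al) \<and> (even i \<longrightarrow> (Suc s, s) \<in> fcover al)"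
  using fcover_in_segment[of i al s] assms i_ge_1 i_le_length unfolding lo_def hi_def by auto

lemma fcover_below_lo:
  assumes "2 \<le> i"
  shows "(odd i \<longrightarrow> (lo, lo - 1) \<in> fcover al) \<and> (even i \<longrightarrow> (lo - 1, lo) \<in> fcover al)"
proof -
  define k where "k = i - 1"
  have k: "1 \<le> k" "k \<le> length al" "Suc (k - 1) = k" "odd k \<longleftrightarrow> even i"
    using assms i_le_length by (auto simp: k_def)
  have "lo = fa al k" by (simp add: lo_def k_def)
  moreover have "fa al k = fa al (k - 1) + al ! (k - 1)" "al ! (k - 1) > 0"
    using fa_Suc[of "k - 1" al] k parts_pos by auto
  ultimately have "fa al (k - 1) \<le> lo - 1" "lo - 1 < fa al k" "1 \<le> lo - 1" "Suc (lo - 1) = lo"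
    using lo_bounds[OF assms] by linarith+
  then show ?thesis using fcover_in_segment[OF k(1,2), of "lo - 1"] lo_bounds[OF assms] k(4)
    by auto
qed

lemma fcover_above_hi:
  assumes "i < length al"
  shows "(odd i \<longrightarrow> (Suc hi, hi) \<in> fcover al) \<and> (even i \<longrightarrow> (hi, Suc hi) \<in> fcover al)"
proof -
  have "fa al (Suc i) = hi + al ! i" "al ! i > 0"
    using assms fa_Suc[of i al] parts_pos by (auto simp: hi_def)
  then show ?thesis using fcover_in_segment[of "Suc i" al hi] assms hi_bounds by (auto simp: hi_def)
qed

lemma sij_in_felems: "1 \<le> j \<Longrightarrow> j \<le> \<beta> \<Longrightarrow> sij j \<in> felems al"
  using Suc_beta hi_le by (auto simp: sij_def felems_def fn_def)

lemma sij_cover: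
  assumes "j \<le> \<beta>" "sij j \<in> felems al" "sij (Suc j) \<in> felems al"
  shows "(sij j, sij (Suc j)) \<in> fcover al"
proof (cases "odd i")
  case True
  then have "sij j = lo + j" "sij (Suc j) = Suc (lo + j)" by (auto simp: sij_def)
  then show ?thesis
    using fcover_inside[of "lo + j"] True assms Suc_beta by (auto simp: felems_def)
next
  case False
  then have "sij (Suc j) = hi - Suc j" "sij j = Suc (hi - Suc j)"
    using assms(1) Suc_beta by (auto simp: sij_def)
  then show ?thesis
    using fcover_inside[of "hi - Suc j"] False assms Suc_beta by (auto simp: felems_def)
qed

lemma sij_fle:
  assumes "j \<le> k" "k \<le> Suc \<beta>" "sij j \<in> felems al" "sij k \<in> felems al"
  shows "fle al (sij j) (sij k)"
proof (cases "odd i")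
  case True
  then have sij: "sij j = lo + j" "sij k = lo + k" by (auto simp: sij_def)
  moreover have "(s, Suc s) \<in> fcover al" if "lo + j \<le> s" "s < lo + k" for s
    using fcover_inside[of s] that True assms Suc_beta sij by (auto simp: felems_def)
  ultimately show ?thesis using assms unfolding fle_iff_fence_run fence_run_def by auto
next
  case False
  then have sij: "sij j = hi - j" "sij k = hi - k" by (auto simp: sij_def)
  moreover have "(Suc s, s) \<in> fcover al" if "hi - k \<le> s" "s < hi - j" for s
    using fcover_inside[of s] that False assms Suc_beta sij by (auto simp: felems_def)
  ultimately show ?thesis using assms unfolding fle_iff_fence_run fence_run_def by auto
qed

lemma inj_on_sij: "inj_on sij {..Suc \<beta>}"
  using Suc_beta by (auto simp: inj_on_def sij_def)

lemma sij_image: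
  assumes "p \<le> q" "q \<le> Suc \<beta>"
  shows "sij ` {p..q} = {min (sij p) (sij q)..max (sij p) (sij q)}"
proof (cases "odd i")
  case True
  then have "sij = (+) lo" by (auto simp: sij_def)
  then show ?thesis using assms by (simp add: add.commute)
next
  case False
  then have sij: "sij = (-) hi" by (auto simp: sij_def)
  have "(-) hi ` {p..q} = {hi - q..hi - p}"
  proof
    show "{hi - q..hi - p} \<subseteq> (-) hi ` {p..q}"
    proof
      fix u assume "u \<in> {hi - q..hi - p}"
      then have "u = hi - (hi - u)" "hi - u \<in> {p..q}" using assms Suc_beta by auto
      then show "u \<in> (-) hi ` {p..q}" by blast
    qed
  qed auto
  then show ?thesis using assms by (simp add: sij)
qed

lemma finterval_sij:
  assumes "p \<le> q" "q \<le> Suc \<beta>" "sij p \<in> felems al" "sij q \<in> felems al"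
  shows "finterval al (sij p) (sij q) = sij ` {p..q}"
  using finterval_eq_atLeastAtMost[OF sij_fle[OF assms]] sij_image[OF assms(1,2)] by simp

lemma card_finterval_sij:
  assumes "p \<le> q" "q \<le> Suc \<beta>" "sij p \<in> felems al" "sij q \<in> felems al"
  shows "card (finterval al (sij p) (sij q)) = Suc q - p"
proof -
  have "inj_on sij {p..q}" using assms(2) by (intro inj_on_subset[OF inj_on_sij]) auto
  then show ?thesis using finterval_sij[OF assms] by (simp add: card_image)
qed

lemma not_in_fshared: "lo < u \<Longrightarrow> u < hi \<Longrightarrow> u \<notin> fshared al"
proof
  assume u: "lo < u" "u < hi" "u \<in> fshared al"
  then obtain k where k: "u = fa al k" unfolding fshared_def by auto
  show False
  proof (cases "k \<le> i - 1")
    case True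
    then have "fa al k \<le> lo" unfolding lo_def by (rule fa_mono)
    then show False using u k by simp
  next
    case False
    then have "hi \<le> fa al k" unfolding hi_def by (intro fa_mono) simp
    then show False using u k by simp
  qed
qed

lemma lo_in_fshared: "2 \<le> i \<Longrightarrow> lo \<in> fshared al"
  unfolding fshared_def lo_def using i_le_length by (intro CollectI exI[of _ "i - 1"]) auto

lemma hi_in_fshared: "i < length al \<Longrightarrow> hi \<in> fshared al"
  unfolding fshared_def hi_def using i_ge_1 by (intro CollectI exI[of _ i]) auto

lemma fsegment_eq: "fsegment al i = {lo..hi} \<inter> felems al"
  by (simp add: fsegment_def lo_def hi_def)

lemma sij_ends: "{sij 0, sij (Suc \<beta>)} = {lo, hi}"
  using Suc_beta by (auto simp: sij_def)

lemma funshared_eq: "funshared al i = sij ` {1..\<beta>}"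
proof -
  have "funshared al i = {lo<..<hi}"
  proof (intro equalityI subsetI)
    fix u assume "u \<in> funshared al i"
    then have u: "lo \<le> u" "u \<le> hi" "u \<in> felems al" "u \<notin> fshared al"
      unfolding funshared_def fsegment_eq by auto
    then have "u \<noteq> lo" "u \<noteq> hi"
      using lo_in_felems_iff lo_in_fshared hi_in_felems_iff hi_in_fshared by auto
    with u show "u \<in> {lo<..<hi}" by auto
  next
    fix u assume u: "u \<in> {lo<..<hi}"
    then have "u \<in> felems al" using hi_le by (auto simp: felems_def fn_def)
    with u show "u \<in> funshared al i" using not_in_fshared unfolding funshared_def fsegment_eq by auto
  qed
  also have "\<dots> = sij ` {1..\<beta>}"
    using sij_image[of 1 \<beta>] beta_ge_1 Suc_beta by (auto simp: sij_def)
  finally show ?thesis .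
qed

lemma fsegment_inter_fshared: "fsegment al i \<inter> fshared al = {sij 0, sij (Suc \<beta>)} \<inter> felems al"
  unfolding fsegment_eq sij_ends
proof (intro equalityI subsetI)
  fix u assume u: "u \<in> {lo..hi} \<inter> felems al \<inter> fshared al"
  then have "\<not> (lo < u \<and> u < hi)" using not_in_fshared by blast
  with u show "u \<in> {lo, hi} \<inter> felems al" by auto
next
  fix u assume "u \<in> {lo, hi} \<inter> felems al"
  then show "u \<in> {lo..hi} \<inter> felems al \<inter> fshared al"
    using lo_in_felems_iff lo_in_fshared hi_in_felems_iff hi_in_fshared hi_eq by auto
qed

lemma sij_0_covers:
  assumes "sij 0 \<in> felems al"
  shows "(sij 0, sij 0 - 1) \<in> fcover al \<and> (sij 0, Suc (sij 0)) \<in> fcover al"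
proof (cases "odd i")
  case True
  then have "sij 0 = lo" "2 \<le> i" using assms lo_in_felems_iff by (auto simp: sij_def)
  then show ?thesis
    using fcover_inside[of lo] fcover_below_lo lo_bounds hi_eq part_i_ge_2 True by auto
next
  case False
  then have "sij 0 = hi" "i < length al" using assms hi_in_felems_iff by (auto simp: sij_def)
  moreover have "Suc (hi - 1) = hi" using hi_eq part_i_ge_2 by simp
  ultimately show ?thesis
    using fcover_inside[of "hi - 1"] fcover_above_hi hi_bounds hi_eq part_i_ge_2 False by auto
qed

lemma sij_top_covers:
  assumes "sij (Suc \<beta>) \<in> felems al"
  shows "(sij (Suc \<beta>) - 1, sij (Suc \<beta>)) \<in> fcover al
    \<and> (Suc (sij (Suc \<beta>)), sij (Suc \<beta>)) \<in> fcover al"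
proof (cases "odd i")
  case True
  then have "sij (Suc \<beta>) = hi" "i < length al"
    using assms hi_in_felems_iff Suc_beta hi_eq by (auto simp: sij_def)
  moreover have "Suc (hi - 1) = hi" using hi_eq part_i_ge_2 by simp
  ultimately show ?thesis
    using fcover_inside[of "hi - 1"] fcover_above_hi hi_bounds hi_eq part_i_ge_2 True by auto
next
  case False
  then have "sij (Suc \<beta>) = lo" "2 \<le> i"
    using assms lo_in_felems_iff Suc_beta hi_eq by (auto simp: sij_def)
  then show ?thesis
    using fcover_inside[of lo] fcover_below_lo lo_bounds hi_eq part_i_ge_2 False by auto
qed

lemma sij_0_valley:
  "sij 0 \<in> felems al \<Longrightarrow> fis_valley al (sij 0) \<and> \<not> fis_peak al (sij 0) \<and> (\<forall>w. (w, sij 0) \<notin> fcover al)"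
  using valley_if_covers sij_0_covers by blast

lemma sij_top_peak:
  "sij (Suc \<beta>) \<in> felems al \<Longrightarrow>
    fis_peak al (sij (Suc \<beta>)) \<and> \<not> fis_valley al (sij (Suc \<beta>)) \<and> (\<forall>w. (sij (Suc \<beta>), w) \<notin> fcover al)"
  using peak_if_covers sij_top_covers by blast

lemma fvalley_eq: "fvalley al i = (if sij 0 \<in> felems al then Some (sij 0) else None)"
proof -
  have "q \<in> fsegment al i \<inter> fshared al \<and> fis_valley al q \<longleftrightarrow> q = sij 0 \<and> sij 0 \<in> felems al" for q
    using sij_0_valley sij_top_peak unfolding fsegment_inter_fshared by blast
  then show ?thesis unfolding fvalley_def by auto
qed

lemma fpeak_eq: "fpeak al i = (if sij (Suc \<beta>) \<in> felems al then Some (sij (Suc \<beta>)) else None)"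
proof -
  have "q \<in> fsegment al i \<inter> fshared al \<and> fis_peak al q \<longleftrightarrow> q = sij (Suc \<beta>) \<and> sij (Suc \<beta>) \<in> felems al" for q
    using sij_0_valley sij_top_peak unfolding fsegment_inter_fshared by blast
  then show ?thesis unfolding fpeak_def by auto
qed

lemma fsmin_eq: "fsmin al i = sij 1"
  unfolding fsmin_def funshared_eq
proof (rule the_equality)
  show "sij 1 \<in> sij ` {1..\<beta>} \<and> (\<forall>w\<in>sij ` {1..\<beta>}. fle al (sij 1) w)"
    using beta_ge_1 sij_in_felems sij_fle by auto
next
  fix u assume u: "u \<in> sij ` {1..\<beta>} \<and> (\<forall>w\<in>sij ` {1..\<beta>}. fle al u w)"
  moreover have "sij 1 \<in> sij ` {1..\<beta>}" using beta_ge_1 by auto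
  moreover from u have "fle al (sij 1) u" using beta_ge_1 sij_in_felems sij_fle by auto
  ultimately show "u = sij 1" using fle_antisym by blast
qed

lemma fsmax_eq: "fsmax al i = sij \<beta>"
  unfolding fsmax_def funshared_eq
proof (rule the_equality)
  show "sij \<beta> \<in> sij ` {1..\<beta>} \<and> (\<forall>w\<in>sij ` {1..\<beta>}. fle al w (sij \<beta>))"
    using beta_ge_1 sij_in_felems sij_fle by auto
next
  fix u assume u: "u \<in> sij ` {1..\<beta>} \<and> (\<forall>w\<in>sij ` {1..\<beta>}. fle al w u)"
  moreover have "sij \<beta> \<in> sij ` {1..\<beta>}" using beta_ge_1 by auto
  moreover from u have "fle al u (sij \<beta>)" using beta_ge_1 sij_in_felems sij_fle by auto
  ultimately show "u = sij \<beta>" using fle_antisym by blast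
qed

lemma fcover_into_sij:
  assumes "1 \<le> j" "j \<le> \<beta>"
  shows "(w, sij j) \<in> fcover al \<longleftrightarrow> w = sij (j - 1) \<and> sij (j - 1) \<in> felems al"
proof
  assume cover: "(w, sij j) \<in> fcover al"
  then have "w = sij (j - 1) \<or> w = sij (Suc j)"
    using fcover_adjacent[OF cover] assms Suc_beta by (cases "odd i") (auto simp: sij_def)
  moreover have "(sij j, sij (Suc j)) \<notin> fcover al \<or> w \<noteq> sij (Suc j)"
    using cover fcover_asym by blast
  ultimately show "w = sij (j - 1) \<and> sij (j - 1) \<in> felems al"
    using sij_cover[of j] fcover_adjacent[OF cover] assms by auto
next
  assume "w = sij (j - 1) \<and> sij (j - 1) \<in> felems al"
  then show "(w, sij j) \<in> fcover al" using sij_cover[of "j - 1"] sij_in_felems assms by auto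
qed

lemma fcover_from_sij:
  assumes "1 \<le> j" "j \<le> \<beta>"
  shows "(sij j, w) \<in> fcover al \<longleftrightarrow> w = sij (Suc j) \<and> sij (Suc j) \<in> felems al"
proof
  assume cover: "(sij j, w) \<in> fcover al"
  then have "w = sij (j - 1) \<or> w = sij (Suc j)"
    using fcover_adjacent[OF cover] assms Suc_beta by (cases "odd i") (auto simp: sij_def)
  moreover have "(sij (j - 1), sij j) \<notin> fcover al \<or> w \<noteq> sij (j - 1)"
    using cover fcover_asym by blast
  ultimately show "w = sij (Suc j) \<and> sij (Suc j) \<in> felems al"
    using sij_cover[of "j - 1"] fcover_adjacent[OF cover] assms by auto
next
  assume "w = sij (Suc j) \<and> sij (Suc j) \<in> felems al"
  then show "(sij j, w) \<in> fcover al" using sij_cover[of j] sij_in_felems assms by auto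
qed

definition level :: "nat set \<Rightarrow> nat" where
  "level I = Max (insert 0 {j \<in> {1..\<beta>}. sij j \<in> I})"

definition valley_out :: "nat set \<Rightarrow> bool" where
  "valley_out I \<longleftrightarrow> sij 0 \<in> felems al \<and> sij 0 \<notin> I"

definition peak_in :: "nat set \<Rightarrow> bool" where
  "peak_in I \<longleftrightarrow> sij (Suc \<beta>) \<in> felems al \<and> sij (Suc \<beta>) \<in> I"

lemma level_cases: "level I = 0 \<or> (1 \<le> level I \<and> level I \<le> \<beta> \<and> sij (level I) \<in> I)"
  using Max_in[of "insert 0 {j \<in> {1..\<beta>}. sij j \<in> I}"] unfolding level_def by auto

lemma level_le: "level I \<le> \<beta>"
  using level_cases[of I] by auto

lemma sij_in_ideal_iff:
  assumes "fideal al I" "1 \<le> j" "j \<le> \<beta>"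
  shows "sij j \<in> I \<longleftrightarrow> j \<le> level I"
proof
  assume "sij j \<in> I"
  then show "j \<le> level I" using assms(2,3) unfolding level_def by (intro Max_ge) auto
next
  assume "j \<le> level I"
  then have "fle al (sij j) (sij (level I))" "sij (level I) \<in> I"
    using level_cases[of I] assms(2,3) sij_in_felems by (auto intro: sij_fle)
  then show "sij j \<in> I" using assms(1) unfolding fideal_def by blast
qed

lemma level_if_valley_out: "fideal al I \<Longrightarrow> valley_out I \<Longrightarrow> level I = 0"
  using level_cases[of I] sij_fle[of 0 "level I"] sij_in_felems
  unfolding valley_out_def fideal_def by fastforce

lemma level_if_peak_in: "fideal al I \<Longrightarrow> peak_in I \<Longrightarrow> level I = \<beta>"
proof -
  assume I: "fideal al I" "peak_in I"
  then have "fle al (sij \<beta>) (sij (Suc \<beta>))"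
    using beta_ge_1 sij_in_felems unfolding peak_in_def by (intro sij_fle) auto
  then have "sij \<beta> \<in> I" using I unfolding fideal_def peak_in_def by blast
  then show ?thesis using sij_in_ideal_iff[OF I(1), of \<beta>] beta_ge_1 level_le[of I] by simp
qed

lemma fmax_sij_iff:
  assumes "fideal al I" "1 \<le> j" "j \<le> \<beta>"
  shows "sij j \<in> fmax al I \<longleftrightarrow> j = level I \<and> (j < \<beta> \<or> \<not> peak_in I)"
proof (cases "sij j \<in> I")
  case False
  then show ?thesis using sij_in_ideal_iff[OF assms] level_le[of I] by (auto simp: fmax_def)
next
  case True
  then have "j \<le> level I" using sij_in_ideal_iff[OF assms] by simp
  have "sij j \<in> fmax al I \<longleftrightarrow> (sij (Suc j) \<in> felems al \<longrightarrow> sij (Suc j) \<notin> I)"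
    using fmax_iff_no_cover_in[OF assms(1) True] fcover_from_sij[OF assms(2,3)] by auto
  also have "\<dots> \<longleftrightarrow> j = level I \<and> (j < \<beta> \<or> \<not> peak_in I)"
  proof (cases "j < \<beta>")
    case True
    then show ?thesis
      using sij_in_felems[of "Suc j"] sij_in_ideal_iff[OF assms(1), of "Suc j"] \<open>j \<le> level I\<close> by auto
  next
    case False
    then show ?thesis using assms(3) level_le[of I] \<open>j \<le> level I\<close> by (auto simp: peak_in_def)
  qed
  finally show ?thesis .
qed

lemma fideal_insert_sij_iff:
  assumes "fideal al I" "1 \<le> j" "j \<le> \<beta>" "sij j \<notin> I"
  shows "fideal al (insert (sij j) I) \<longleftrightarrow> j = Suc (level I) \<and> (2 \<le> j \<or> \<not> valley_out I)"
proof -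
  have "level I < j" using sij_in_ideal_iff[OF assms(1-3)] assms(4) by simp
  have "fideal al (insert (sij j) I) \<longleftrightarrow> (sij (j - 1) \<in> felems al \<longrightarrow> sij (j - 1) \<in> I)"
    using fideal_insert_iff_covers_in[OF assms(1) sij_in_felems[OF assms(2,3)]]
      fcover_into_sij[OF assms(2,3)] by auto
  also have "\<dots> \<longleftrightarrow> j = Suc (level I) \<and> (2 \<le> j \<or> \<not> valley_out I)"
  proof (cases "2 \<le> j")
    case True
    then show ?thesis
      using sij_in_felems[of "j - 1"] sij_in_ideal_iff[OF assms(1), of "j - 1"] assms(3) \<open>level I < j\<close>
      by auto
  next
    case False
    then show ?thesis using assms(2) \<open>level I < j\<close> by (auto simp: valley_out_def)
  qed
  finally show ?thesis .
qed

lemma fT_sij: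
  assumes "fideal al I" "1 \<le> j" "j \<le> \<beta>"
  shows "fT al (sij j) I = of_bool (j = Suc (level I) \<and> (2 \<le> j \<or> \<not> valley_out I))
    - of_bool (j = level I \<and> (j < \<beta> \<or> \<not> peak_in I))"
proof (cases "sij j \<in> I")
  case True
  then show ?thesis using sij_in_ideal_iff[OF assms] fmax_sij_iff[OF assms] unfolding fT_def by auto
next
  case False
  then have "sij j \<notin> fmax al I" by (auto simp: fmax_def)
  then show ?thesis
    using False sij_in_ideal_iff[OF assms] fideal_insert_sij_iff[OF assms False] sij_in_felems[OF assms(2,3)]
    unfolding fT_def by auto
qed

lemma fchi_sij:
  "fideal al I \<Longrightarrow> 1 \<le> j \<Longrightarrow> j \<le> \<beta> \<Longrightarrow>
    fchi al (sij j) I = of_bool (j = level I \<and> (j < \<beta> \<or> \<not> peak_in I))"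
  using fmax_sij_iff unfolding fchi_def by auto

lemma optstat_fchi_fT_valley:
  assumes "fideal al I"
  shows "optstat (fchi al) (fvalley al i) I + optstat (fT al) (fvalley al i) I = of_bool (valley_out I)"
proof (cases "sij 0 \<in> felems al")
  case True
  have "fideal al (insert (sij 0) I)"
    using fideal_insert_iff_covers_in[OF assms True] sij_0_valley[OF True] by auto
  then show ?thesis using True unfolding fvalley_eq optstat_def valley_out_def fchi_def fT_def fmax_def by auto
next
  case False
  then show ?thesis unfolding fvalley_eq optstat_def valley_out_def by simp
qed

lemma optstat_fchi_peak:
  assumes "fideal al I"
  shows "optstat (fchi al) (fpeak al i) I = of_bool (peak_in I)"
proof (cases "sij (Suc \<beta>) \<in> I")
  case True
  then have "sij (Suc \<beta>) \<in> felems al \<Longrightarrow> sij (Suc \<beta>) \<in> fmax al I"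
    using fmax_iff_no_cover_in[OF assms] sij_top_peak by blast
  then show ?thesis using True unfolding fpeak_eq optstat_def peak_in_def fchi_def by auto
next
  case False
  then show ?thesis unfolding fpeak_eq optstat_def peak_in_def fchi_def fmax_def by auto
qed

lemma sum_fsmin_interval:
  assumes "1 \<le> m" "m \<le> \<beta>"
  shows "(\<Sum>u \<in> {u \<in> felems al. fle al (fsmin al i) u \<and> fle al u (sij m)}.
      int (card (finterval al (fsmin al i) u)) * f u) = (\<Sum>j=1..m. int j * f (sij j))"
proof -
  have "{u \<in> felems al. fle al (sij 1) u \<and> fle al u (sij m)} = sij ` {1..m}"
    using finterval_sij[of 1 m] assms sij_in_felems unfolding finterval_def by auto
  moreover have "inj_on sij {1..m}" using assms by (intro inj_on_subset[OF inj_on_sij]) auto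
  moreover have "card (finterval al (sij 1) (sij j)) = j" if "j \<in> {1..m}" for j
    using card_finterval_sij[of 1 j] that assms sij_in_felems by auto
  ultimately show ?thesis unfolding fsmin_eq by (simp add: sum.reindex)
qed

lemma sum_fsmax_interval:
  assumes "1 \<le> m" "m \<le> \<beta>"
  shows "(\<Sum>u \<in> {u \<in> felems al. flt al (sij m) u \<and> fle al u (fsmax al i)}.
      int (card (finterval al u (fsmax al i))) * f u) = (\<Sum>j=Suc m..\<beta>. int (Suc \<beta> - j) * f (sij j))"
proof -
  have inj: "inj_on sij {m..\<beta>}" by (intro inj_on_subset[OF inj_on_sij]) auto
  have "{u \<in> felems al. flt al (sij m) u \<and> fle al u (sij \<beta>)} = finterval al (sij m) (sij \<beta>) - {sij m}"
    unfolding finterval_def flt_def by auto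
  also have "\<dots> = sij ` {m..\<beta>} - sij ` {m}"
    using finterval_sij[of m \<beta>] assms sij_in_felems by auto
  also have "\<dots> = sij ` ({m..\<beta>} - {m})"
    using inj_on_image_set_diff[OF inj, of "{m..\<beta>}" "{m}"] assms by auto
  also have "{m..\<beta>} - {m} = {Suc m..\<beta>}" by auto
  finally have "{u \<in> felems al. flt al (sij m) u \<and> fle al u (sij \<beta>)} = sij ` {Suc m..\<beta>}" .
  moreover have "inj_on sij {Suc m..\<beta>}" by (intro inj_on_subset[OF inj_on_sij]) auto
  moreover have "card (finterval al (sij j) (sij \<beta>)) = Suc \<beta> - j" if "j \<in> {Suc m..\<beta>}" for j
    using card_finterval_sij[of j \<beta>] that assms sij_in_felems by auto
  ultimately show ?thesis unfolding fsmax_eq by (simp add: sum.reindex)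
qed

lemma identity_at_sij:
  assumes "fideal al I" "1 \<le> m" "m \<le> \<beta>"
  shows "int (Suc \<beta>) * fchi al (sij m) I + of_bool (valley_out I) + of_bool (peak_in I)
    = 1 - (\<Sum>j=1..m. int j * fT al (sij j) I) + (\<Sum>j=Suc m..\<beta>. int (Suc \<beta> - j) * fT al (sij j) I)"
proof -
  have "(\<Sum>j=1..m. int j * fT al (sij j) I) = (\<Sum>j=1..m. int j *
      (of_bool (j = Suc (level I) \<and> (2 \<le> j \<or> \<not> valley_out I)) - of_bool (j = level I \<and> (j < \<beta> \<or> \<not> peak_in I))))"
    using assms by (intro sum.cong) (simp_all add: fT_sij)
  moreover have "(\<Sum>j=Suc m..\<beta>. int (Suc \<beta> - j) * fT al (sij j) I) = (\<Sum>j=Suc m..\<beta>. int (Suc \<beta> - j) *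
      (of_bool (j = Suc (level I) \<and> (2 \<le> j \<or> \<not> valley_out I)) - of_bool (j = level I \<and> (j < \<beta> \<or> \<not> peak_in I))))"
    using assms by (intro sum.cong) (simp_all add: fT_sij)
  ultimately show ?thesis
    using level_count_identity[OF assms(2,3) level_le] level_if_valley_out[OF assms(1)]
      level_if_peak_in[OF assms(1)] fchi_sij[OF assms] by simp
qed

end

theorem theorem3p1:
  fixes alpha :: "nat list" and i x :: nat
  assumes "length alpha \<ge> 2"
    and "\<forall>k \<in> set alpha. k > 0"
    and "hd alpha \<ge> 2" and "last alpha \<ge> 2"
    and "1 \<le> i" and "i \<le> length alpha" and "alpha ! (i - 1) \<ge> 2"
    and "x \<in> funshared alpha i"
  shows "\<forall>I. fideal alpha I \<longrightarrow>
     int (alpha ! (i - 1)) * fchi alpha x I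
       + optstat (fchi alpha) (fvalley alpha i) I + optstat (fchi alpha) (fpeak alpha i) I
     = 1 - optstat (fT alpha) (fvalley alpha i) I
       - (\<Sum>u \<in> {u \<in> felems alpha. fle alpha (fsmin alpha i) u \<and> fle alpha u x}.
            int (card (finterval alpha (fsmin alpha i) u)) * fT alpha u I)
       + (\<Sum>u \<in> {u \<in> felems alpha. flt alpha x u \<and> fle alpha u (fsmax alpha i)}.
            int (card (finterval alpha u (fsmax alpha i))) * fT alpha u I)"
proof -
  interpret fence_segment alpha i using assms by unfold_locales auto
  obtain m where x: "x = sij m" and m: "1 \<le> m" "m \<le> \<beta>" using assms(8) funshared_eq by auto
  show ?thesis
    unfolding x alpha_i_eq sum_fsmin_interval[OF m] sum_fsmax_interval[OF m]
    by (intro allI impI, frule identity_at_sij[OF _ m], frule optstat_fchi_fT_valley,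
        drule optstat_fchi_peak) linarith
qed

end
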